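(* Let $G=(N,A)$ be a directed graph with arc capacities $u_{ij}\ge0$, and suppose there is a single commodity ($K=\{1\}$) with origin $O(1)$ and destination $D(1)$. Fix $\bar y\in\{0,1\}^{|A|}$ and a scenario $\bar s$ with demand $d^1(\omega_{\bar s})\ge0$, and assume $\bar y$ is not feasible for $\bar s$. Let $\mathcal C$ be the set of all $(O(1),D(1))$ cuts in $G$ and let $$C^*_{\mathrm{SNC}}\in\arg\max_{C\in\mathcal C}\frac{d^1(\omega_{\bar s})-\sum_{(i,j)\in C}u_{ij}\bar y_{ij}}{|C|+1}.$$ Then there is an optimal solution $(\mu^*,\pi^*,\lambda^* )$ of the SNC dual program at $(\bar y,\omega_{\bar s})$ whose derived feasibility cut $d^1(\omega_{\bar s})\lambda^{1*}-\sum_{(i,j)\in A}u_{ij}\pi^*_{ij}y_{ij}\le0$ (in variables $y$) is equivalent to $$\sum_{(i,j)\in C^*_{\mathrm{SNC}}}u_{ij}y_{ij}\ge d^1(\omega_{\bar s}).$$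
   Context: Admissible arcs for commodity 1: $A^1=\{(i,j)\in A: j\neq O(1),\ i\neq D(1)\}$. Feasibility: $\bar y$ is feasible for scenario $\bar s$ if there exist flows $x^1_{ij}\ge0$, $(i,j)\in A^1$, with flow conservation at every $i\notin\{O(1),D(1)\}$, capacities $x^1_{ij}\le u_{ij}\bar y_{ij}$, and inflow into $D(1)$ at least $d^1(\omega_{\bar s})$. An $(O(1),D(1))$ cut is an arc set $\{(i,j)\in A: i\in W, j\notin W\}$ for some $W\subseteq N$ with $O(1)\in W$, $D(1)\notin W$. The SNC dual program at $(y,\omega)$: maximize $d^1(\omega)\lambda^1-\sum_{(i,j)\in A}u_{ij}y_{ij}\pi_{ij}$ over $\mu^1_i$ free ($i\in N$), $\pi_{ij}\ge0$, $\lambda^1\ge0$, subject to $\mu^1_{O(1)}=0$, $\mu^1_{D(1)}=\lambda^1$, $\pi_{ij}\ge\mu^1_j-\mu^1_i$ for all $(i,j)\in A^1$, and $\sum_{(i,j)\in A}\pi_{ij}+\lambda^1\le1$. "Equivalent" means the two inequalities define the same set of $y$ (they coincide up to a positive scalar multiple). *)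

theory Defs
  imports Main "HOL-Library.Indicator_Function"
begin

definition adm_arcs :: "('n \<times> 'n) set \<Rightarrow> 'n \<Rightarrow> 'n \<Rightarrow> ('n \<times> 'n) set" where
  "adm_arcs A orig dest = {(i,j) \<in> A. j \<noteq> orig \<and> i \<noteq> dest}"

definition feasible ::
  "'n set \<Rightarrow> ('n \<times> 'n) set \<Rightarrow> ('n \<times> 'n \<Rightarrow> real) \<Rightarrow> 'n \<Rightarrow> 'n \<Rightarrow> real
     \<Rightarrow> ('n \<times> 'n \<Rightarrow> real) \<Rightarrow> bool" where
  "feasible N A u orig dest dem y \<longleftrightarrow>
     (\<exists>x :: 'n \<times> 'n \<Rightarrow> real.
        (\<forall>a \<in> adm_arcs A orig dest. 0 \<le> x a \<and> x a \<le> u a * y a) \<and>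
        (\<forall>i \<in> N - {orig, dest}.
            (\<Sum>a \<in> {a \<in> adm_arcs A orig dest. snd a = i}. x a) =
            (\<Sum>a \<in> {a \<in> adm_arcs A orig dest. fst a = i}. x a)) \<and>
        (\<Sum>a \<in> {a \<in> adm_arcs A orig dest. snd a = dest}. x a) \<ge> dem)"

definition od_cuts :: "'n set \<Rightarrow> ('n \<times> 'n) set \<Rightarrow> 'n \<Rightarrow> 'n \<Rightarrow> ('n \<times> 'n) set set" where
  "od_cuts N A orig dest =
     {{(i,j) \<in> A. i \<in> W \<and> j \<notin> W} | W. W \<subseteq> N \<and> orig \<in> W \<and> dest \<notin> W}"

definition snc_ratio ::
  "('n \<times> 'n \<Rightarrow> real) \<Rightarrow> real \<Rightarrow> ('n \<times> 'n \<Rightarrow> real) \<Rightarrow> ('n \<times> 'n) set \<Rightarrow> real" where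
  "snc_ratio u dem y C = (dem - (\<Sum>a \<in> C. u a * y a)) / (real (card C) + 1)"

definition snc_dual_feasible ::
  "('n \<times> 'n) set \<Rightarrow> 'n \<Rightarrow> 'n \<Rightarrow> ('n \<Rightarrow> real) \<Rightarrow> ('n \<times> 'n \<Rightarrow> real) \<Rightarrow> real \<Rightarrow> bool" where
  "snc_dual_feasible A orig dest mu pii lam \<longleftrightarrow>
     mu orig = 0 \<and> mu dest = lam \<and> 0 \<le> lam \<and>
     (\<forall>a \<in> A. 0 \<le> pii a) \<and>
     (\<forall>(i,j) \<in> adm_arcs A orig dest. pii (i,j) \<ge> mu j - mu i) \<and>
     (\<Sum>a \<in> A. pii a) + lam \<le> 1"

definition snc_dual_obj ::
  "('n \<times> 'n) set \<Rightarrow> ('n \<times> 'n \<Rightarrow> real) \<Rightarrow> real \<Rightarrow> ('n \<times> 'n \<Rightarrow> real)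
     \<Rightarrow> ('n \<times> 'n \<Rightarrow> real) \<Rightarrow> real \<Rightarrow> real" where
  "snc_dual_obj A u dem y pii lam = dem * lam - (\<Sum>a \<in> A. u a * y a * pii a)"

definition snc_dual_optimal ::
  "('n \<times> 'n) set \<Rightarrow> ('n \<times> 'n \<Rightarrow> real) \<Rightarrow> 'n \<Rightarrow> 'n \<Rightarrow> real \<Rightarrow> ('n \<times> 'n \<Rightarrow> real)
     \<Rightarrow> ('n \<Rightarrow> real) \<Rightarrow> ('n \<times> 'n \<Rightarrow> real) \<Rightarrow> real \<Rightarrow> bool" where
  "snc_dual_optimal A u orig dest dem y mu pii lam \<longleftrightarrow>
     snc_dual_feasible A orig dest mu pii lam \<and>
     (\<forall>mu' pii' lam'. snc_dual_feasible A orig dest mu' pii' lam' \<longrightarrow>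
        snc_dual_obj A u dem y pii' lam' \<le> snc_dual_obj A u dem y pii lam)"

end

theory Submission
  imports Defs "HOL-Analysis.Analysis"
begin

text \<open>
  Infeasibility of ybar means, by the augmenting-path argument for max-flow min-cut (a maximum
  flow exists by compactness, and if the destination is unreachable in its residual graph, the
  reachable nodes span a saturated cut), that some cut has capacity below the demand d; so the
  best ratio R is positive. If C* is the set of arcs leaving W*, then lambda = 1/(|C*| + 1),
  pi = lambda 1_C*, mu = lambda 1_(N - W*) is a dual solution of value R whose cut is lambda times
  the cut inequality of C*. It is optimal: clipping mu to [0, lambda] keeps pi_ij bounded below
  by the positive part of mu_j - mu_i, and the bound d - u(C) <= R (|C| + 1) for the cuts C
  leaving the level sets {i. mu_i <= tau}, integrated over 0 <= tau < lambda, gives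
  d lambda - sum u pi <= R (sum pi + lambda) <= R.
\<close>

definition inflow :: "('n \<times> 'n) set \<Rightarrow> ('n \<times> 'n \<Rightarrow> real) \<Rightarrow> 'n \<Rightarrow> real" where
  "inflow E x i = (\<Sum>a \<in> {a \<in> E. snd a = i}. x a)"

definition outflow :: "('n \<times> 'n) set \<Rightarrow> ('n \<times> 'n \<Rightarrow> real) \<Rightarrow> 'n \<Rightarrow> real" where
  "outflow E x i = (\<Sum>a \<in> {a \<in> E. fst a = i}. x a)"

text \<open>Flow is conserved at the nodes in M; vanishing off E makes the set of flows compact.\<close>

definition flows :: "('n \<times> 'n) set \<Rightarrow> ('n \<times> 'n \<Rightarrow> real) \<Rightarrow> 'n set \<Rightarrow> ('n \<times> 'n \<Rightarrow> real) set" where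
  "flows E cap M = {x. (\<forall>a\<in>E. 0 \<le> x a \<and> x a \<le> cap a) \<and> (\<forall>a. a \<notin> E \<longrightarrow> x a = 0) \<and>
                       (\<forall>i\<in>M. inflow E x i = outflow E x i)}"

definition residual :: "('n \<times> 'n) set \<Rightarrow> ('n \<times> 'n \<Rightarrow> real) \<Rightarrow> ('n \<times> 'n \<Rightarrow> real) \<Rightarrow> ('n \<times> 'n) set" where
  "residual E cap x = {(q, r). ((q, r) \<in> E \<and> x (q, r) < cap (q, r)) \<or> ((r, q) \<in> E \<and> 0 < x (r, q))}"

definition residual_direction ::
  "('n \<times> 'n) set \<Rightarrow> ('n \<times> 'n \<Rightarrow> real) \<Rightarrow> ('n \<times> 'n \<Rightarrow> real) \<Rightarrow> ('n \<times> 'n \<Rightarrow> real) \<Rightarrow> bool" where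
  "residual_direction E cap x D \<longleftrightarrow>
     (\<forall>a. a \<notin> E \<longrightarrow> D a = 0) \<and> (\<forall>a\<in>E. (0 < D a \<longrightarrow> x a < cap a) \<and> (D a < 0 \<longrightarrow> 0 < x a))"

definition cut_arcs :: "('n \<times> 'n) set \<Rightarrow> 'n set \<Rightarrow> ('n \<times> 'n) set" where
  "cut_arcs E W = {(i, j) \<in> E. i \<in> W \<and> j \<notin> W}"

lemma cut_arcs_subset: "cut_arcs E W \<subseteq> E"
  unfolding cut_arcs_def by auto

lemma inflow_add_scaled:
  "finite E \<Longrightarrow> inflow E (\<lambda>a. x a + e * D a) i = inflow E x i + e * inflow E D i"
  unfolding inflow_def by (simp add: sum.distrib sum_distrib_left)

lemma outflow_add_scaled:
  "finite E \<Longrightarrow> outflow E (\<lambda>a. x a + e * D a) i = outflow E x i + e * outflow E D i"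
  unfolding outflow_def by (simp add: sum.distrib sum_distrib_left)

lemma inflow_indicator: "finite E \<Longrightarrow> b \<in> E \<Longrightarrow> inflow E (indicator {b}) i = of_bool (snd b = i)"
  unfolding inflow_def by (simp add: indicator_def)

lemma outflow_indicator: "finite E \<Longrightarrow> b \<in> E \<Longrightarrow> outflow E (indicator {b}) i = of_bool (fst b = i)"
  unfolding outflow_def by (simp add: indicator_def)

lemma sum_inflow:
  assumes "finite E" "finite U"
  shows "(\<Sum>i\<in>U. inflow E x i) = sum x {a \<in> E. snd a \<in> U}"
proof -
  have "(\<Sum>i\<in>U. inflow E x i) = (\<Sum>i\<in>U. sum x {a \<in> {a \<in> E. snd a \<in> U}. snd a = i})"
    unfolding inflow_def by (intro sum.cong) auto
  also have "\<dots> = sum x {a \<in> E. snd a \<in> U}"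
    using assms by (intro sum.group) auto
  finally show ?thesis .
qed

lemma sum_outflow:
  assumes "finite E" "finite U"
  shows "(\<Sum>i\<in>U. outflow E x i) = sum x {a \<in> E. fst a \<in> U}"
proof -
  have "(\<Sum>i\<in>U. outflow E x i) = (\<Sum>i\<in>U. sum x {a \<in> {a \<in> E. fst a \<in> U}. fst a = i})"
    unfolding outflow_def by (intro sum.cong) auto
  also have "\<dots> = sum x {a \<in> E. fst a \<in> U}"
    using assms by (intro sum.group) auto
  finally show ?thesis .
qed

lemma outflow_eq_0_if_no_out_arcs: "\<forall>a\<in>E. fst a \<noteq> t \<Longrightarrow> outflow E x t = 0"
  unfolding outflow_def by (rule sum.neutral) auto

lemma max_flow_exists:
  assumes "finite E" and "\<forall>a\<in>E. 0 \<le> cap a"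
  shows "\<exists>x\<in>flows E cap M. \<forall>y\<in>flows E cap M. inflow E y t \<le> inflow E x t"
proof -
  define K where "K = PiE UNIV (\<lambda>a. if a \<in> E then {0..cap a} else {0::real})"
  have "compactin (product_topology (\<lambda>_. euclidean) UNIV) K"
    unfolding K_def compactin_PiE by auto
  then have "compact K" by (simp add: euclidean_product_topology)
  have cont: "continuous_on UNIV (\<lambda>x. inflow E x i)" "continuous_on UNIV (\<lambda>x. outflow E x i)" for i
    unfolding inflow_def outflow_def by (auto intro!: continuous_intros)
  have "closed {x. \<forall>i\<in>M. inflow E x i = outflow E x i}"
    unfolding Ball_def
    by (intro closed_Collect_all closed_Collect_imp closed_Collect_eq open_Collect_const) (use cont in auto)
  moreover have "flows E cap M = K \<inter> {x. \<forall>i\<in>M. inflow E x i = outflow E x i}"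
    unfolding flows_def K_def by (auto simp: PiE_iff split: if_splits)
  ultimately have "compact (flows E cap M)" using \<open>compact K\<close> by auto
  moreover have "(\<lambda>_. 0) \<in> flows E cap M"
    using assms(2) unfolding flows_def inflow_def outflow_def by auto
  ultimately show ?thesis
    using continuous_attains_sup[OF _ _ continuous_on_subset[OF cont(1)]] by blast
qed

lemma residual_path_direction:
  assumes fin: "finite E" and "(src, r) \<in> (residual E cap x)\<^sup>*"
  shows "\<exists>D. residual_direction E cap x D \<and>
           (\<forall>i. i \<noteq> src \<longrightarrow> i \<noteq> r \<longrightarrow> inflow E D i - outflow E D i = 0) \<and>
           (r \<noteq> src \<longrightarrow> inflow E D r - outflow E D r = 1)"
  using assms(2)
proof (induction rule: rtrancl_induct)
  case base
  show ?case
    by (intro exI[of _ "\<lambda>_. 0"]) (simp add: residual_direction_def inflow_def outflow_def)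
next
  case (step q r)
  from step.IH obtain D where D: "residual_direction E cap x D"
    and D_bal: "\<forall>i. i \<noteq> src \<longrightarrow> i \<noteq> q \<longrightarrow> inflow E D i - outflow E D i = 0"
    and D_q: "q \<noteq> src \<longrightarrow> inflow E D q - outflow E D q = 1"
    by blast
  from step.hyps(2) obtain b and s :: real where b: "b \<in> E"
    and bs: "(s = 1 \<and> b = (q, r) \<and> x b < cap b) \<or> (s = -1 \<and> b = (r, q) \<and> 0 < x b)"
    unfolding residual_def by auto
  define D' where "D' = (\<lambda>a. D a + s * indicator {b} a)"
  have net: "inflow E D' i - outflow E D' i
      = inflow E D i - outflow E D i + of_bool (i = r) - of_bool (i = q)" for i
    using bs unfolding D'_def inflow_add_scaled[OF fin] outflow_add_scaled[OF fin]
      inflow_indicator[OF fin b] outflow_indicator[OF fin b] by auto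
  have "residual_direction E cap x D'"
    using D b bs unfolding residual_direction_def D'_def by (auto simp: indicator_def)
  moreover have "inflow E D' i - outflow E D' i = 0" if "i \<noteq> src" "i \<noteq> r" for i
    using net[of i] D_bal D_q that by (cases "i = q") auto
  moreover have "inflow E D' r - outflow E D' r = 1" if "r \<noteq> src"
    using net[of r] D_bal D_q that by (cases "r = q") auto
  ultimately show ?case by blast
qed

lemma small_step_within_bounds:
  fixes x c d :: real
  assumes "0 \<le> x" "x \<le> c" "0 < d \<Longrightarrow> x < c" "d < 0 \<Longrightarrow> 0 < x"
  shows "\<forall>\<^sub>F e in at_right 0. 0 \<le> x + e * d \<and> x + e * d \<le> c"
proof -
  have lim: "((\<lambda>e. x + e * d) \<longlongrightarrow> x) (at_right 0)"
    by (auto intro!: tendsto_eq_intros)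
  have "\<forall>\<^sub>F e in at_right 0. 0 \<le> x + e * d"
  proof (cases "d < 0")
    case True
    then show ?thesis using order_tendstoD(1)[OF lim, of 0] assms(4) by (auto elim: eventually_mono)
  next
    case False
    then show ?thesis using assms(1) eventually_at_right_less[of 0] by (auto elim!: eventually_mono)
  qed
  moreover have "\<forall>\<^sub>F e in at_right 0. x + e * d \<le> c"
  proof (cases "0 < d")
    case True
    then show ?thesis using order_tendstoD(2)[OF lim, of c] assms(3) by (auto elim: eventually_mono)
  next
    case False
    have "x + e * d \<le> c" if "0 < e" for e :: real
      using False that assms(2) mult_nonneg_nonpos[of e d] by linarith
    then show ?thesis using eventually_at_right_less[of 0] by (auto elim: eventually_mono)
  qed
  ultimately show ?thesis by (rule eventually_conj)
qed

lemma flow_augmentation: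
  assumes fin: "finite E" and x: "x \<in> flows E cap M" and "src \<notin> M" "t \<notin> M"
    and no_out: "\<forall>a\<in>E. fst a \<noteq> t" and path: "(src, t) \<in> (residual E cap x)\<^sup>*" and "t \<noteq> src"
  shows "\<exists>x'\<in>flows E cap M. inflow E x t < inflow E x' t"
proof -
  obtain D where D: "residual_direction E cap x D"
    and D_bal: "\<forall>i. i \<noteq> src \<longrightarrow> i \<noteq> t \<longrightarrow> inflow E D i - outflow E D i = 0"
    and D_t: "inflow E D t - outflow E D t = 1"
    using residual_path_direction[OF fin path] \<open>t \<noteq> src\<close> by blast
  have x_bounds: "\<forall>a\<in>E. 0 \<le> x a \<and> x a \<le> cap a"
    and x_out: "\<forall>a. a \<notin> E \<longrightarrow> x a = 0"
    and x_cons: "\<forall>i\<in>M. inflow E x i = outflow E x i"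
    using x unfolding flows_def by auto
  have "\<forall>\<^sub>F e in at_right 0. 0 < e \<and> (\<forall>a\<in>E. 0 \<le> x a + e * D a \<and> x a + e * D a \<le> cap a)"
    using x_bounds D unfolding residual_direction_def
    by (intro eventually_conj eventually_at_right_less eventually_ball_finite fin ballI
        small_step_within_bounds) auto
  then obtain e where e: "0 < e" and e_bounds: "\<forall>a\<in>E. 0 \<le> x a + e * D a \<and> x a + e * D a \<le> cap a"
    using eventually_happens'[OF trivial_limit_at_right_real] by blast
  define x' where "x' = (\<lambda>a. x a + e * D a)"
  have "x' \<in> flows E cap M"
    using e_bounds x_out D x_cons D_bal \<open>src \<notin> M\<close> \<open>t \<notin> M\<close>
    unfolding flows_def residual_direction_def x'_def
    by (auto simp: inflow_add_scaled[OF fin] outflow_add_scaled[OF fin])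
  moreover have "outflow E D t = 0"
    using no_out by (rule outflow_eq_0_if_no_out_arcs)
  then have "inflow E x' t = inflow E x t + e"
    using D_t unfolding x'_def inflow_add_scaled[OF fin] by simp
  ultimately show ?thesis using e by force
qed

lemma inflow_sink_eq_net_cut_flow:
  assumes "finite N" and EN: "E \<subseteq> N \<times> N" and x: "x \<in> flows E cap (N - {src, t})"
    and "src \<in> W" "t \<notin> W" "t \<in> N" and no_out: "\<forall>a\<in>E. fst a \<noteq> t"
  shows "inflow E x t = sum x (cut_arcs E W) - sum x (cut_arcs E (- W))"
proof -
  define U where "U = N - W"
  have "finite E" using assms(1) EN finite_subset finite_SigmaI by blast
  have "finite U" "t \<in> U" using assms unfolding U_def by auto
  have "outflow E x t = 0"
    using no_out by (rule outflow_eq_0_if_no_out_arcs)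
  moreover have "inflow E x i - outflow E x i = 0" if "i \<in> U - {t}" for i
    using x that \<open>src \<in> W\<close> unfolding flows_def U_def by auto
  ultimately have "inflow E x t = (\<Sum>i\<in>U. inflow E x i - outflow E x i)"
    using \<open>finite U\<close> \<open>t \<in> U\<close> by (simp add: sum.remove)
  also have "\<dots> = sum x {a \<in> E. snd a \<in> U} - sum x {a \<in> E. fst a \<in> U}"
    using \<open>finite E\<close> \<open>finite U\<close> by (simp add: sum_subtractf sum_inflow sum_outflow)
  also have "\<dots> = (\<Sum>a\<in>E. (if snd a \<in> U then x a else 0) - (if fst a \<in> U then x a else 0))"
    using \<open>finite E\<close> by (simp add: sum_subtractf sum.inter_filter)
  also have "\<dots> = (\<Sum>a\<in>E. (if a \<in> cut_arcs E W then x a else 0) - (if a \<in> cut_arcs E (- W) then x a else 0))"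
    using EN by (intro sum.cong) (auto simp: U_def cut_arcs_def)
  also have "\<dots> = sum x (E \<inter> cut_arcs E W) - sum x (E \<inter> cut_arcs E (- W))"
    using \<open>finite E\<close> by (simp add: sum_subtractf sum.inter_restrict)
  also have "\<dots> = sum x (cut_arcs E W) - sum x (cut_arcs E (- W))"
    by (simp add: Int_absorb1[OF cut_arcs_subset])
  finally show ?thesis .
qed

lemma residual_closed_cut_saturated:
  assumes "\<forall>a\<in>E. 0 \<le> x a \<and> x a \<le> cap a"
    and closed: "\<And>i j. (i, j) \<in> residual E cap x \<Longrightarrow> i \<in> W \<Longrightarrow> j \<in> W"
  shows "a \<in> cut_arcs E W \<Longrightarrow> x a = cap a" and "a \<in> cut_arcs E (- W) \<Longrightarrow> x a = 0"
  using assms unfolding cut_arcs_def residual_def by force+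

lemma cut_capacities_ge_imp_flow:
  assumes "finite N" and EN: "E \<subseteq> N \<times> N" and "src \<in> N" "t \<in> N" "src \<noteq> t"
    and no_out: "\<forall>a\<in>E. fst a \<noteq> t" and cap: "\<forall>a\<in>E. 0 \<le> cap a"
    and cuts: "\<And>W. W \<subseteq> N \<Longrightarrow> src \<in> W \<Longrightarrow> t \<notin> W \<Longrightarrow> dem \<le> sum cap (cut_arcs E W)"
  shows "\<exists>x\<in>flows E cap (N - {src, t}). dem \<le> inflow E x t"
proof -
  let ?M = "N - {src, t}"
  have "finite E" using assms(1) EN finite_subset finite_SigmaI by blast
  obtain x where x: "x \<in> flows E cap ?M" and x_max: "\<forall>y\<in>flows E cap ?M. inflow E y t \<le> inflow E x t"
    using max_flow_exists[OF \<open>finite E\<close> cap] by blast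
  have "(src, t) \<notin> (residual E cap x)\<^sup>*"
    using flow_augmentation[OF \<open>finite E\<close> x _ _ no_out] x_max \<open>src \<noteq> t\<close> by force
  define W where "W = {r \<in> N. (src, r) \<in> (residual E cap x)\<^sup>*}"
  have W: "W \<subseteq> N" "src \<in> W" "t \<notin> W"
    using \<open>src \<in> N\<close> \<open>(src, t) \<notin> _\<close> unfolding W_def by auto
  have closed: "(i, j) \<in> residual E cap x \<Longrightarrow> i \<in> W \<Longrightarrow> j \<in> W" for i j
    using EN unfolding W_def residual_def by (auto intro: rtrancl_into_rtrancl)
  have "x a = cap a" if "a \<in> cut_arcs E W" for a
    using x that closed residual_closed_cut_saturated(1) unfolding flows_def by blast
  moreover have "x a = 0" if "a \<in> cut_arcs E (- W)" for a
    using x that closed residual_closed_cut_saturated(2) unfolding flows_def by blast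
  ultimately have "inflow E x t = sum cap (cut_arcs E W)"
    using inflow_sink_eq_net_cut_flow[OF assms(1) EN x W(2,3) \<open>t \<in> N\<close> no_out] by simp
  then show ?thesis using x cuts[OF W] by (intro bexI[of _ x]) simp_all
qed

lemma integrable_indicator_Ico: "integrable lborel (indicator {a..<b::real} :: real \<Rightarrow> real)"
  by (cases "a \<le> b") auto

lemma integral_indicator_Ico: "(LINT \<tau>|lborel. indicator {a..<b::real} \<tau> :: real) = max 0 (b - a)"
  by (cases "a \<le> b") auto

lemma integral_sum_indicator_Ico:
  fixes p q w :: "'a \<Rightarrow> real"
  shows "(LINT \<tau>|lborel. (\<Sum>a\<in>A. w a * indicator {p a..<q a} \<tau>)) = (\<Sum>a\<in>A. w a * max 0 (q a - p a))"
proof -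
  have "(LINT \<tau>|lborel. (\<Sum>a\<in>A. w a * indicator {p a..<q a} \<tau>))
      = (\<Sum>a\<in>A. LINT \<tau>|lborel. w a * indicator {p a..<q a} \<tau>)"
    by (intro Bochner_Integration.integral_sum integrable_mult_right integrable_indicator_Ico)
  also have "\<dots> = (\<Sum>a\<in>A. w a * max 0 (q a - p a))"
    by (simp only: integral_mult_right_zero integral_indicator_Ico)
  finally show ?thesis .
qed

text \<open>The cut bounds at the level sets {i. nu i \<le> \<tau>}, 0 \<le> \<tau> < lam, integrated over \<tau>.\<close>

lemma cut_bounds_imp_potential_bound:
  fixes nu :: "'n \<Rightarrow> real" and c :: "'n \<times> 'n \<Rightarrow> real"
  assumes "finite A" and AN: "A \<subseteq> N \<times> N" and c: "\<forall>a\<in>A. 0 \<le> c a" and "0 \<le> R" and "0 \<le> lam"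
    and "nu src = 0" "nu t = lam" "src \<in> N" "t \<in> N"
    and cut_bound: "\<And>W. W \<subseteq> N \<Longrightarrow> src \<in> W \<Longrightarrow> t \<notin> W \<Longrightarrow>
                      dem - sum c (cut_arcs A W) \<le> R * (real (card (cut_arcs A W)) + 1)"
  shows "dem * lam - (\<Sum>a\<in>A. c a * max 0 (nu (snd a) - nu (fst a)))
           \<le> R * ((\<Sum>a\<in>A. max 0 (nu (snd a) - nu (fst a))) + lam)"
proof -
  define g where "g \<tau> = (\<Sum>a\<in>A. (R + c a) * indicator {nu (fst a)..<nu (snd a)} \<tau>)
                       - (dem - R) * indicator {0..<lam} \<tau>" for \<tau> :: real
  have "0 \<le> g \<tau>" for \<tau>
  proof (cases "\<tau> \<in> {0..<lam}")
    case False
    then show ?thesis unfolding g_def using \<open>0 \<le> R\<close> c by (auto intro!: sum_nonneg)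
  next
    case True
    define W where "W = {i \<in> N. nu i \<le> \<tau>}"
    have W: "W \<subseteq> N" "src \<in> W" "t \<notin> W" using True assms(6-9) unfolding W_def by auto
    have cut: "cut_arcs A W = {a \<in> A. \<tau> \<in> {nu (fst a)..<nu (snd a)}}"
      using AN unfolding W_def cut_arcs_def by auto
    have "(\<Sum>a\<in>A. (R + c a) * indicator {nu (fst a)..<nu (snd a)} \<tau>)
        = (\<Sum>a\<in>A. (R + c a) * indicator (cut_arcs A W) a)"
      unfolding cut by (intro sum.cong) (auto simp: indicator_def)
    also have "\<dots> = (\<Sum>a\<in>cut_arcs A W. R + c a)"
      using \<open>finite A\<close> by (simp add: Int_absorb1[OF cut_arcs_subset])
    also have "\<dots> = R * real (card (cut_arcs A W)) + sum c (cut_arcs A W)"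
      by (simp add: sum.distrib)
    finally show ?thesis using cut_bound[OF W] True unfolding g_def by (simp add: algebra_simps)
  qed
  then have "0 \<le> (LINT \<tau>|lborel. g \<tau>)" by (simp add: integral_nonneg)
  also have "(LINT \<tau>|lborel. g \<tau>)
      = (LINT \<tau>|lborel. (\<Sum>a\<in>A. (R + c a) * indicator {nu (fst a)..<nu (snd a)} \<tau>))
        - (LINT \<tau>|lborel. (dem - R) * indicator {0..<lam} \<tau>)"
    unfolding g_def
    by (intro Bochner_Integration.integral_diff Bochner_Integration.integrable_sum
        integrable_mult_right integrable_indicator_Ico)
  also have "\<dots> = (\<Sum>a\<in>A. (R + c a) * max 0 (nu (snd a) - nu (fst a))) - (dem - R) * lam"
    using \<open>0 \<le> lam\<close>
    by (simp only: integral_sum_indicator_Ico integral_mult_right_zero integral_indicator_Ico) simp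
  finally show ?thesis by (simp add: algebra_simps sum.distrib sum_distrib_left)
qed

lemma od_cuts_eq: "od_cuts N A orig dest = {cut_arcs A W | W. W \<subseteq> N \<and> orig \<in> W \<and> dest \<notin> W}"
  unfolding od_cuts_def cut_arcs_def ..

lemma cut_arcs_adm_arcs:
  "orig \<in> W \<Longrightarrow> dest \<notin> W \<Longrightarrow> cut_arcs (adm_arcs A orig dest) W = cut_arcs A W"
  unfolding cut_arcs_def adm_arcs_def by auto

lemma flow_imp_feasible:
  assumes "x \<in> flows (adm_arcs A orig dest) (\<lambda>a. u a * y a) (N - {orig, dest})"
    and "dem \<le> inflow (adm_arcs A orig dest) x dest"
  shows "feasible N A u orig dest dem y"
  using assms unfolding feasible_def flows_def inflow_def outflow_def by (intro exI[of _ x]) auto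

lemma infeasible_imp_cut_below_demand:
  assumes "finite N" "A \<subseteq> N \<times> N" "orig \<in> N" "dest \<in> N" "orig \<noteq> dest"
    and "\<forall>a\<in>A. 0 \<le> u a * y a" and "\<not> feasible N A u orig dest dem y"
  obtains W where "W \<subseteq> N" "orig \<in> W" "dest \<notin> W" "(\<Sum>a\<in>cut_arcs A W. u a * y a) < dem"
proof (rule ccontr)
  note cut_found = that
  assume "\<not> thesis"
  let ?E = "adm_arcs A orig dest"
  have "?E \<subseteq> A" and no_out: "\<forall>a\<in>?E. fst a \<noteq> dest"
    unfolding adm_arcs_def by auto
  then have EN: "?E \<subseteq> N \<times> N" and cap: "\<forall>a\<in>?E. 0 \<le> u a * y a"
    using assms(2,6) by blast+
  have cuts: "dem \<le> (\<Sum>a\<in>cut_arcs ?E W. u a * y a)" if "W \<subseteq> N" "orig \<in> W" "dest \<notin> W" for W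
    unfolding cut_arcs_adm_arcs[OF that(2,3)] using that cut_found[of W] \<open>\<not> thesis\<close>
    by (meson not_less)
  obtain x where "x \<in> flows ?E (\<lambda>a. u a * y a) (N - {orig, dest})" "dem \<le> inflow ?E x dest"
    using cut_capacities_ge_imp_flow[OF assms(1) EN assms(3-5) no_out cap cuts] by blast
  with assms(7) show False by (metis flow_imp_feasible)
qed

lemma infeasible_imp_positive_cut_ratio:
  assumes "finite N" "A \<subseteq> N \<times> N" "orig \<in> N" "dest \<in> N" "orig \<noteq> dest"
    and "\<forall>a\<in>A. 0 \<le> u a * y a" and "\<not> feasible N A u orig dest dem y"
  obtains C where "C \<in> od_cuts N A orig dest" "0 < snc_ratio u dem y C"
proof -
  obtain W where "W \<subseteq> N" "orig \<in> W" "dest \<notin> W" and "(\<Sum>a\<in>cut_arcs A W. u a * y a) < dem"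
    using infeasible_imp_cut_below_demand[OF assms] by blast
  then show ?thesis
    using that[of "cut_arcs A W"] by (auto simp: od_cuts_eq snc_ratio_def add_pos_nonneg)
qed

lemma snc_dual_feasible_cut_solution:
  assumes "finite A" "orig \<in> W" "dest \<notin> W" and lam: "lam = 1 / (real (card (cut_arcs A W)) + 1)"
  shows "snc_dual_feasible A orig dest (\<lambda>i. if i \<in> W then 0 else lam)
           (\<lambda>a. lam * indicator (cut_arcs A W) a) lam"
proof -
  have "0 < lam" using lam by simp
  moreover have "(\<Sum>a\<in>A. lam * indicator (cut_arcs A W) a) + lam = 1"
    using \<open>finite A\<close> lam by (simp add: Int_absorb1[OF cut_arcs_subset] field_simps)
  ultimately show ?thesis
    using assms(2,3) unfolding snc_dual_feasible_def
    by (auto simp: cut_arcs_def adm_arcs_def indicator_def)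
qed

lemma snc_dual_obj_cut_solution:
  assumes "finite A" "C \<subseteq> A" and lam: "lam = 1 / (real (card C) + 1)"
  shows "snc_dual_obj A u dem y (\<lambda>a. lam * indicator C a) lam = snc_ratio u dem y C"
proof -
  have "(\<Sum>a\<in>A. u a * y a * (lam * indicator C a)) = (\<Sum>a\<in>A. lam * (u a * y a) * indicator C a)"
    by (simp add: mult_ac)
  also have "\<dots> = lam * (\<Sum>a\<in>C. u a * y a)"
    using assms(1,2) by (simp add: Int_absorb1 sum_distrib_left)
  finally have "(\<Sum>a\<in>A. u a * y a * (lam * indicator C a)) = lam * (\<Sum>a\<in>C. u a * y a)" .
  then show ?thesis
    unfolding snc_dual_obj_def snc_ratio_def lam by (simp add: field_simps)
qed

lemma snc_dual_clipped_gap_le: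
  assumes "snc_dual_feasible A orig dest mu pii lam" and "(i, j) \<in> A"
  shows "max 0 (min lam (max 0 (mu j)) - min lam (max 0 (mu i))) \<le> pii (i, j)"
proof -
  have "0 \<le> lam" "mu orig = 0" "mu dest = lam" "0 \<le> pii (i, j)"
    using assms unfolding snc_dual_feasible_def by auto
  consider "(i, j) \<in> adm_arcs A orig dest" | "j = orig" | "i = dest"
    using assms(2) unfolding adm_arcs_def by auto
  then show ?thesis
  proof cases
    case 1
    then have "mu j - mu i \<le> pii (i, j)"
      using assms(1) unfolding snc_dual_feasible_def by auto
    moreover have "min lam (max 0 (mu j)) - min lam (max 0 (mu i)) \<le> max 0 (mu j - mu i)"
      by (simp add: min_def max_def)
    ultimately show ?thesis using \<open>0 \<le> pii (i, j)\<close> by linarith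
  qed (use \<open>0 \<le> lam\<close> \<open>mu orig = 0\<close> \<open>mu dest = lam\<close> \<open>0 \<le> pii (i, j)\<close> in \<open>simp_all add: min_def max_def\<close>)
qed

lemma snc_dual_obj_le_ratio_bound:
  assumes "finite A" "A \<subseteq> N \<times> N" "orig \<in> N" "dest \<in> N"
    and cap: "\<forall>a\<in>A. 0 \<le> u a * y a" and "0 \<le> R"
    and ratio_le: "\<And>C. C \<in> od_cuts N A orig dest \<Longrightarrow> snc_ratio u dem y C \<le> R"
    and feas: "snc_dual_feasible A orig dest mu pii lam"
  shows "snc_dual_obj A u dem y pii lam \<le> R"
proof -
  define nu where "nu i = min lam (max 0 (mu i))" for i
  define gap where "gap a = max 0 (nu (snd a) - nu (fst a))" for a
  have "0 \<le> lam" "nu orig = 0" "nu dest = lam" "\<forall>a\<in>A. 0 \<le> pii a" "(\<Sum>a\<in>A. pii a) + lam \<le> 1"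
    using feas unfolding snc_dual_feasible_def nu_def by auto
  have gap_le: "gap a \<le> pii a" if "a \<in> A" for a
    using snc_dual_clipped_gap_le[OF feas, of "fst a" "snd a"] that unfolding gap_def nu_def by simp
  have "dem - (\<Sum>a\<in>cut_arcs A W. u a * y a) \<le> R * (real (card (cut_arcs A W)) + 1)"
    if "W \<subseteq> N" "orig \<in> W" "dest \<notin> W" for W
    using ratio_le[of "cut_arcs A W"] that
    by (auto simp: od_cuts_eq snc_ratio_def divide_le_eq add_pos_nonneg)
  then have "dem * lam - (\<Sum>a\<in>A. u a * y a * gap a) \<le> R * ((\<Sum>a\<in>A. gap a) + lam)"
    unfolding gap_def
    using cut_bounds_imp_potential_bound[of A N "\<lambda>a. u a * y a" R lam nu orig dest dem] assms
      \<open>0 \<le> lam\<close> \<open>nu orig = 0\<close> \<open>nu dest = lam\<close> by blast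
  moreover have "(\<Sum>a\<in>A. u a * y a * gap a) \<le> (\<Sum>a\<in>A. u a * y a * pii a)"
    using gap_le cap by (intro sum_mono mult_left_mono) auto
  moreover have "R * ((\<Sum>a\<in>A. gap a) + lam) \<le> R * 1"
    using gap_le \<open>0 \<le> R\<close> \<open>(\<Sum>a\<in>A. pii a) + lam \<le> 1\<close> sum_mono[of A gap pii]
    by (intro mult_left_mono) auto
  ultimately show ?thesis unfolding snc_dual_obj_def by linarith
qed

theorem theorem3:
  fixes N :: "'n set" and A :: "('n \<times> 'n) set" and u :: "'n \<times> 'n \<Rightarrow> real"
    and orig dest :: 'n and dem :: real and ybar :: "'n \<times> 'n \<Rightarrow> real"
    and Cstar :: "('n \<times> 'n) set"
  assumes "finite N" and "A \<subseteq> N \<times> N"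
    and "orig \<in> N" and "dest \<in> N" and "orig \<noteq> dest"
    and "\<forall>a \<in> A. 0 \<le> u a"
    and "\<forall>a \<in> A. ybar a \<in> {0, 1}"
    and "0 \<le> dem"
    and "\<not> feasible N A u orig dest dem ybar"
    and "Cstar \<in> od_cuts N A orig dest"
    and "\<forall>C \<in> od_cuts N A orig dest. snc_ratio u dem ybar C \<le> snc_ratio u dem ybar Cstar"
  shows "\<exists>mu pii lam. snc_dual_optimal A u orig dest dem ybar mu pii lam \<and>
           (\<exists>c > 0. dem * lam = c * dem \<and>
              (\<forall>a \<in> A. u a * pii a = c * (u a * indicator Cstar a)))"
proof -
  have "finite A" using assms(1,2) finite_subset by blast
  have cap: "\<forall>a\<in>A. 0 \<le> u a * ybar a" using assms(6,7) by auto
  obtain C0 where "C0 \<in> od_cuts N A orig dest" "0 < snc_ratio u dem ybar C0"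
    using infeasible_imp_positive_cut_ratio[OF assms(1-5) cap assms(9)] by blast
  then have "0 < snc_ratio u dem ybar Cstar"
    using assms(11) by force
  obtain W where "orig \<in> W" "dest \<notin> W" and Cstar: "Cstar = cut_arcs A W"
    using assms(10) by (auto simp: od_cuts_eq)
  define lam where "lam = 1 / (real (card Cstar) + 1)"
  let ?mu = "\<lambda>i. if i \<in> W then 0 else lam" and ?pii = "\<lambda>a. lam * indicator Cstar a"
  have "snc_dual_feasible A orig dest ?mu ?pii lam"
    using snc_dual_feasible_cut_solution[OF \<open>finite A\<close> \<open>orig \<in> W\<close> \<open>dest \<notin> W\<close> lam_def[unfolded Cstar]]
    unfolding Cstar .
  moreover have "snc_dual_obj A u dem ybar ?pii lam = snc_ratio u dem ybar Cstar"
    using \<open>finite A\<close> cut_arcs_subset lam_def unfolding Cstar by (rule snc_dual_obj_cut_solution)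
  ultimately have "snc_dual_optimal A u orig dest dem ybar ?mu ?pii lam"
    using snc_dual_obj_le_ratio_bound[OF \<open>finite A\<close> assms(2-4) cap less_imp_le assms(11)[rule_format]]
      \<open>0 < snc_ratio _ _ _ Cstar\<close>
    unfolding snc_dual_optimal_def by auto
  moreover have "0 < lam" unfolding lam_def by simp
  ultimately show ?thesis
    by (intro exI[of _ ?mu] exI[of _ ?pii] exI[of _ lam] conjI ballI) simp_all
qed

end
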